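(* Let $p\geqslant 1$ and let $n_0,\dots,n_{p-1}>1$ be natural numbers; let $n$ be their least common multiple, and for $i\neq j$ let $d_{i,j}$ be the greatest common divisor of $n_i$ and $n_j$. Let $c_0,\dots,c_{p-1}$ be integers with $\sum_{i<p}c_i\,(n/n_i)=1$. Then for all positive rational numbers $t_0,\dots,t_{p-1}$ and $x$, putting $\beta=\prod_{i<p}t_i^{c_i(n/n_i)}$, we have $$\bigwedge_{i<p}\Re_{n_i}(x\cdot t_i)\iff \Re_n(x\cdot\beta)\wedge\bigwedge_{i\neq j}\Re_{d_{i,j}}(t_i\cdot t_j^{-1}).$$
   Context: For a natural number $k\geqslant 1$ and a positive rational $y$, $\Re_k(y)$ means that there exists a positive rational $x$ with $y=x^k$ (so $\Re_1(y)$ always holds). *)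

theory Defs
  imports Complex_Main
begin

definition is_pow :: "nat \<Rightarrow> rat \<Rightarrow> bool" where
  "is_pow k y \<longleftrightarrow> (\<exists>x::rat. x > 0 \<and> y = x ^ k)"

end

theory Submission
  imports Defs
begin

text \<open>Write \<open>n = lcm n\<^sub>i\<close> and \<open>e\<^sub>i = c\<^sub>i (n / n\<^sub>i)\<close>, so that \<open>\<Sum> e\<^sub>i = 1\<close> and
  \<open>x \<beta> = \<Prod> (x t\<^sub>i)^e\<^sub>i\<close>. If every \<open>x t\<^sub>i\<close> is an \<open>n\<^sub>i\<close>-th power, each factor is an \<open>n\<close>-th power
  because \<open>n\<^sub>i e\<^sub>i\<close> is a multiple of \<open>n\<close>, and \<open>t\<^sub>i / t\<^sub>j = (x t\<^sub>i) / (x t\<^sub>j)\<close> is a \<open>d\<^sub>i\<^sub>j\<close>-th power.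
  Conversely \<open>x t\<^sub>i = x \<beta> \<cdot> \<Prod>\<^sub>j (t\<^sub>i / t\<^sub>j)^e\<^sub>j\<close>, where \<open>x \<beta>\<close> is an \<open>n\<close>-th, hence \<open>n\<^sub>i\<close>-th power,
  and each \<open>(t\<^sub>i / t\<^sub>j)^e\<^sub>j\<close> is an \<open>n\<^sub>i\<close>-th power since \<open>n\<^sub>i\<close> divides \<open>d\<^sub>i\<^sub>j (n / n\<^sub>j)\<close>.\<close>

lemma is_pow_one: "is_pow k 1"
  unfolding is_pow_def by (intro exI[of _ 1]) simp

lemma is_pow_mult: "is_pow k a \<Longrightarrow> is_pow k b \<Longrightarrow> is_pow k (a * b)"
  unfolding is_pow_def by (metis mult_pos_pos power_mult_distrib)

lemma is_pow_prod: "(\<And>j. j \<in> A \<Longrightarrow> is_pow k (f j)) \<Longrightarrow> is_pow k (prod f A)"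
proof (induction A rule: infinite_finite_induct)
  case (insert a A)
  then show ?case by (simp add: is_pow_mult)
qed (simp_all add: is_pow_one)

lemma is_pow_power_int:
  assumes "is_pow d a" and "int k dvd int d * e"
  shows "is_pow k (a powi e)"
proof -
  obtain w :: rat where w: "w > 0" "a = w ^ d"
    using assms(1) unfolding is_pow_def by blast
  obtain q where q: "int d * e = int k * q"
    using assms(2) by (auto elim: dvdE)
  have "a powi e = w powi (int d * e)"
    using w by (simp add: power_int_power)
  also have "\<dots> = (w powi q) ^ k"
    using q by (simp add: power_int_power' mult.commute)
  finally show ?thesis
    unfolding is_pow_def using w by (intro exI[of _ "w powi q"]) simp
qed

lemma is_pow_dvd: "is_pow n a \<Longrightarrow> k dvd n \<Longrightarrow> is_pow k a"
  using is_pow_power_int[of n a k 1] by simp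

lemma is_pow_gcd_quotient:
  assumes "is_pow m (x * a)" and "is_pow k (x * b)" and "x \<noteq> 0"
  shows "is_pow (gcd m k) (a * inverse b)"
proof -
  obtain u where u: "u > 0" "x * a = u ^ m" using assms(1) unfolding is_pow_def by blast
  obtain v where v: "v > 0" "x * b = v ^ k" using assms(2) unfolding is_pow_def by blast
  obtain m' where m': "m = gcd m k * m'" by (metis gcd_dvd1 dvdE)
  obtain k' where k': "k = gcd m k * k'" by (metis gcd_dvd2 dvdE)
  have "a * inverse b = (x * a) * inverse (x * b)"
    using assms(3) by simp
  also have "\<dots> = u ^ (m' * gcd m k) * inverse (v ^ (k' * gcd m k))"
    using u(2) v(2) m' k' by (simp add: mult.commute)
  also have "\<dots> = (u ^ m' * inverse (v ^ k')) ^ gcd m k"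
    by (simp add: power_mult power_mult_distrib power_inverse)
  finally show ?thesis
    unfolding is_pow_def using u v by (intro exI[of _ "u ^ m' * inverse (v ^ k')"]) simp
qed

lemma power_int_sum: "(a :: 'a :: field) \<noteq> 0 \<Longrightarrow> a powi (\<Sum>j\<in>A. e j) = (\<Prod>j\<in>A. a powi e j)"
  by (induction A rule: infinite_finite_induct) (auto simp: power_int_add)

lemma prod_power_int_mult_const:
  assumes "(a :: 'a :: field) \<noteq> 0" and "(\<Sum>j\<in>A. e j) = 1"
  shows "(\<Prod>j\<in>A. (a * b j) powi e j) = a * (\<Prod>j\<in>A. b j powi e j)"
  using power_int_sum[OF assms(1), of e A] assms(2)
  by (simp add: power_int_mult_distrib prod.distrib)

lemma prod_power_int_quotient:
  assumes "(a :: 'a :: field) \<noteq> 0" and "(\<Sum>j\<in>A. e j) = 1"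
  shows "(\<Prod>j\<in>A. (a * inverse (b j)) powi e j) = a * inverse (\<Prod>j\<in>A. b j powi e j)"
  using prod_power_int_mult_const[OF assms, of "\<lambda>j. inverse (b j)"]
  by (simp add: power_int_inverse prod_inversef[of "\<lambda>j. b j powi e j", unfolded o_def])

lemma dvd_gcd_mult_cofactor:
  fixes m k n :: nat
  assumes "m dvd n" and "k dvd n" and "k > 0"
  shows "m dvd gcd m k * (n div k)"
proof -
  have "lcm m k dvd n"
    using assms(1,2) by simp
  then have "gcd m k * lcm m k dvd gcd m k * n"
    by (rule mult_dvd_mono[OF dvd_refl])
  moreover have "gcd m k * lcm m k = k * m"
    by (simp add: gcd_mult_lcm mult.commute)
  moreover have "gcd m k * n = k * (gcd m k * (n div k))"
    using assms(2) by (metis dvd_mult_div_cancel mult.left_commute)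
  ultimately show ?thesis
    using assms(3) by simp
qed

lemma is_pow_weighted_prod:
  assumes "\<And>i. i \<in> A \<Longrightarrow> is_pow (m i) (x * t i)"
    and "\<And>i. i \<in> A \<Longrightarrow> m i dvd n"
    and "(\<Sum>i\<in>A. c i * int (n div m i)) = 1" and "x \<noteq> 0"
  shows "is_pow n (x * (\<Prod>i\<in>A. t i powi (c i * int (n div m i))))"
proof -
  have "int n dvd int (m i) * (c i * int (n div m i))" if "i \<in> A" for i
  proof -
    have "int (m i) * (c i * int (n div m i)) = c i * int (m i * (n div m i))"
      by (simp only: of_nat_mult mult.left_commute)
    also have "\<dots> = c i * int n"
      using assms(2)[OF that] by simp
    finally show ?thesis
      by (simp only: dvd_triv_right)
  qed
  then have "is_pow n (\<Prod>i\<in>A. (x * t i) powi (c i * int (n div m i)))"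
    using assms(1) by (intro is_pow_prod is_pow_power_int)
  then show ?thesis
    using prod_power_int_mult_const[OF assms(4,3)] by simp
qed

lemma is_pow_from_weighted_prod:
  assumes "is_pow n (x * (\<Prod>j\<in>A. t j powi (c j * int (n div m j))))" and "i \<in> A"
    and "\<And>j. j \<in> A \<Longrightarrow> m j dvd n" and "\<And>j. j \<in> A \<Longrightarrow> m j > 0"
    and "\<And>j. j \<in> A \<Longrightarrow> j \<noteq> i \<Longrightarrow> is_pow (gcd (m i) (m j)) (t i * inverse (t j))"
    and "(\<Sum>j\<in>A. c j * int (n div m j)) = 1" and "\<And>j. j \<in> A \<Longrightarrow> t j \<noteq> 0"
  shows "is_pow (m i) (x * t i)"
proof -
  define e where "e j = c j * int (n div m j)" for j
  let ?\<beta> = "\<Prod>j\<in>A. t j powi e j"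
  have weight_dvd: "int (m i) dvd int (gcd (m i) (m j)) * e j" if "j \<in> A" for j
  proof -
    have "m i dvd gcd (m i) (m j) * (n div m j)"
      using assms(3)[OF assms(2)] assms(3)[OF that] assms(4)[OF that] by (rule dvd_gcd_mult_cofactor)
    then have "int (m i) dvd c j * int (gcd (m i) (m j) * (n div m j))"
      by (intro dvd_mult) (simp only: int_dvd_int_iff)
    then show ?thesis
      unfolding e_def by (simp only: of_nat_mult mult.left_commute)
  qed
  have "is_pow (m i) (\<Prod>j\<in>A. (t i * inverse (t j)) powi e j)"
  proof (rule is_pow_prod)
    fix j assume j: "j \<in> A"
    show "is_pow (m i) ((t i * inverse (t j)) powi e j)"
    proof (cases "j = i")
      case True
      then show ?thesis
        using assms(7)[OF j] by (simp add: is_pow_one)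
    next
      case False
      show ?thesis
        using is_pow_power_int[OF assms(5)[OF j False] weight_dvd[OF j]] .
    qed
  qed
  moreover have "(\<Prod>j\<in>A. (t i * inverse (t j)) powi e j) = t i * inverse ?\<beta>"
    unfolding e_def by (rule prod_power_int_quotient[OF assms(7)[OF assms(2)] assms(6)])
  moreover have "is_pow (m i) (x * ?\<beta>)"
    using is_pow_dvd[OF assms(1) assms(3)[OF assms(2)]] unfolding e_def .
  ultimately have "is_pow (m i) ((x * ?\<beta>) * (t i * inverse ?\<beta>))"
    by (simp add: is_pow_mult)
  moreover have "?\<beta> \<noteq> 0"
    using assms(7) by (cases "finite A") auto
  then have "(x * ?\<beta>) * (t i * inverse ?\<beta>) = x * t i"
    by (simp add: field_simps)
  ultimately show ?thesis
    by simp
qed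

theorem lemma2:
  fixes p :: nat and ns :: "nat \<Rightarrow> nat" and c :: "nat \<Rightarrow> int"
    and t :: "nat \<Rightarrow> rat" and x :: rat
  assumes "p \<ge> 1"
    and "\<And>i. i < p \<Longrightarrow> ns i > 1"
    and "(\<Sum>i<p. c i * int (Lcm (ns ` {..<p}) div ns i)) = 1"
    and "\<And>i. i < p \<Longrightarrow> t i > 0"
    and "x > 0"
  shows "(\<forall>i<p. is_pow (ns i) (x * t i)) \<longleftrightarrow>
         (is_pow (Lcm (ns ` {..<p}))
            (x * (\<Prod>i<p. t i powi (c i * int (Lcm (ns ` {..<p}) div ns i))))
          \<and> (\<forall>i<p. \<forall>j<p. i \<noteq> j \<longrightarrow> is_pow (gcd (ns i) (ns j)) (t i * inverse (t j))))"
proof (intro iffI conjI allI impI)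
  have ns_dvd: "ns i dvd Lcm (ns ` {..<p})" if "i \<in> {..<p}" for i
    using that by (simp add: dvd_Lcm)
  assume roots: "\<forall>i<p. is_pow (ns i) (x * t i)"
  then show "is_pow (Lcm (ns ` {..<p}))
      (x * (\<Prod>i<p. t i powi (c i * int (Lcm (ns ` {..<p}) div ns i))))"
    using ns_dvd assms(3,5) by (intro is_pow_weighted_prod) auto
  fix i j assume "i < p" "j < p"
  with roots show "is_pow (gcd (ns i) (ns j)) (t i * inverse (t j))"
    using assms(5) by (intro is_pow_gcd_quotient[of _ x]) simp_all
next
  fix i assume "i < p"
  assume "is_pow (Lcm (ns ` {..<p}))
      (x * (\<Prod>i<p. t i powi (c i * int (Lcm (ns ` {..<p}) div ns i))))
    \<and> (\<forall>i<p. \<forall>j<p. i \<noteq> j \<longrightarrow> is_pow (gcd (ns i) (ns j)) (t i * inverse (t j)))"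
  then have root: "is_pow (Lcm (ns ` {..<p}))
      (x * (\<Prod>i\<in>{..<p}. t i powi (c i * int (Lcm (ns ` {..<p}) div ns i))))"
    and ratios: "\<And>j. j \<in> {..<p} \<Longrightarrow> j \<noteq> i \<Longrightarrow> is_pow (gcd (ns i) (ns j)) (t i * inverse (t j))"
    using \<open>i < p\<close> by auto
  have "ns j > 0" and "t j \<noteq> 0" if "j \<in> {..<p}" for j
    using assms(2,4) that by force+
  with \<open>i < p\<close> show "is_pow (ns i) (x * t i)"
    using assms(3) by (intro is_pow_from_weighted_prod[OF root _ _ _ ratios]) (simp_all add: dvd_Lcm)
qed

end
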